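(* Let $N\in\mathbb{N}$, $T>0$, $\underline t\ge0$, $\overline t=\underline t+NT$, $t_k=\underline t+kT$, let $\mathbf x_0,\dots,\mathbf x_N\in\mathbb{R}^n$ and let $\mathbf x_d$ be the associated Bézier trajectory with Bézier curves $r_k$ and control points $(\boldsymbol\zeta_k)_i$, $(\xi_k)_{n,i}$ (context). Let $\alpha,\beta\ge0$, $u_{\max}>0$, and let $\overline{\mathbf x}_0,\dots,\overline{\mathbf x}_{N-1}\in\mathcal X$. Suppose that for each $k=0,\dots,N-1$ there exists $\mathbf s_k\in\mathbb{R}^2_{\ge0}$ such that, for all $i=0,\dots,2n-1$, $$\begin{bmatrix}\|(\boldsymbol\zeta_k)_i-\overline{\mathbf x}_k\|_2\\ |(\xi_k)_{n,i}-f(\overline{\mathbf x}_k)|\end{bmatrix}\le\mathbf s_k\ \text{(elementwise)},\qquad \tfrac12\mathbf s_k^\top M_{\alpha,\beta}\mathbf s_k+N_{\alpha,\beta}(\overline{\mathbf x}_k)^\top\mathbf s_k+\Gamma_{\alpha,\beta}(\overline{\mathbf x}_k)\le u_{\max}.$$ Then for every $k$ and every $t\in[t_k,t_{k+1})$, $$\tfrac12\boldsymbol\sigma_{\mathbf x_d}(t)^\top M_{\alpha,\beta}\boldsymbol\sigma_{\mathbf x_d}(t)+N_{\alpha,\beta}(\overline{\mathbf x}_k)^\top\boldsymbol\sigma_{\mathbf x_d}(t)+\Gamma_{\alpha,\beta}(\overline{\mathbf x}_k)\le u_{\max},$$ where $\boldsymbol\sigma_{\mathbf x_d}(t)=\big(\|\mathbf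 x_d(t)-\overline{\mathbf x}_k\|_2,\ |r_k^{(n)}(t-t_k)-f(\overline{\mathbf x}_k)|\big)^\top$ for $t\in[t_k,t_{k+1})$ (note $r_k^{(n)}(t-t_k)$ is the last component of $\dot{\mathbf x}_d(t)$, right derivative at $t_k$).
   Context: $f,g:\mathbb{R}^n\to\mathbb{R}$ are continuously differentiable, $f(\mathbf 0)=0$, $g(\mathbf x)\ne0$ for all $\mathbf x$; $\mathcal X\subset\mathbb{R}^n$ is a compact convex polytope containing $\mathbf 0$ in its interior. $\mathbf K\in\mathbb{R}^n$ makes $F=A_0-e_n\mathbf K^\top$ Hurwitz ($A_0$ the $n\times n$ matrix with ones on the superdiagonal and zeros elsewhere, $e_n$ last basis vector); $Q\succ0$, $P\succ0$ solves $F^\top P+PF=-Q$, $\gamma=4\lambda_{\max}(P)^3/\lambda_{\min}(Q)^2$, $\overline w\ge0$, $\overline e=\sqrt{\gamma\overline w^2/\lambda_{\min}(P)}$. $M_{\alpha,\beta}=\pi_{\rm PSD}\!\left(\begin{bmatrix}2\alpha\beta&\beta\\\beta&0\end{bmatrix}\right)$ ($\pi_{\rm PSD}$: projection onto the PSD cone, zeroing negative eigenvalues); $N_{\alpha,\beta}(\overline{\mathbf x})=\big(2\alpha\beta\overline e+\alpha|g(\overline{\mathbf x})^{-1}|+\beta\|\mathbf K\|_2\overline e,\ |g(\overline{\mathbf x})^{-1}|+\beta\overline e\big)^\top$; $\Gamma_{\alpha,\beta}(\overline{\mathbf x})=\overline e(\beta\overline e+|g(\overline{\mathbf x})^{-1}|)(\alpha+\|\mathbf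 K\|_2)$. Bézier trajectory: with $z_i(\tau)=\binom{p}{i}(\tau/T)^i(1-\tau/T)^{p-i}$, a Bézier curve of order $p$ is $r=\boldsymbol\xi_0^\top\mathbf z$; with $S\in\mathbb{R}^{p\times(p+1)}$ ($S_{ii}=-p$, $S_{i,i+1}=p$), $R\in\mathbb{R}^{(p+1)\times p}$ ($R_{ii}=(p+1-i)/p$, $R_{i+1,i}=i/p$), other entries zero, $H=S^\top R^\top$, one has $r^{(j)}=\boldsymbol\xi_j^\top\mathbf z$ with $\boldsymbol\xi_j=T^{-j}(H^\top)^j\boldsymbol\xi_0$. For $k=0,\dots,N-1$, $r_k$ is the unique order-$(2n-1)$ Bézier curve with $r_k^{(j-1)}(0)=x_k^j$, $r_k^{(j-1)}(T)=x_{k+1}^j$, $j=1,\dots,n$; its control vectors are $(\boldsymbol\xi_k)_j$ with entries $(\xi_k)_{j,i}$, $i=0,\dots,2n-1$; $(\boldsymbol\zeta_k)_i=((\xi_k)_{0,i},\dots,(\xi_k)_{n-1,i})^\top$; $\mathbf r_k=(r_k,\dots,r_k^{(n-1)})^\top$; $\mathbf x_d(t)=\mathbf r_k(t-t_k)$ on $[t_k,t_{k+1})$, $\mathbf x_d(\overline t)=\mathbf x_N$. *)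

theory Defs
  imports "HOL-Analysis.Analysis"
begin

text \<open>R^n is rendered as real^'n with CARD('n) = n; the linear order on the index
type fixes which coordinate is the j-th one: coordinate c is number cpos c (0-based).\<close>

definition cpos :: "'n::{finite,linorder} \<Rightarrow> nat" where
  "cpos c = card {c'. c' < c}"

definition sym_mat :: "real^'n^'n \<Rightarrow> bool" where
  "sym_mat A \<longleftrightarrow> transpose A = A"

definition pos_def :: "real^'n^'n \<Rightarrow> bool" where
  "pos_def A \<longleftrightarrow> sym_mat A \<and> (\<forall>x. x \<noteq> 0 \<longrightarrow> 0 < x \<bullet> (A *v x))"

definition psd_cone :: "(real^'n^'n) set" where
  "psd_cone = {B. sym_mat B \<and> (\<forall>x. 0 \<le> x \<bullet> (B *v x))}"

text \<open>Projection onto the PSD cone (nearest point in Frobenius norm, which is the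
norm of real^'n^'n).\<close>
definition psd_proj :: "real^'n^'n \<Rightarrow> real^'n^'n" where
  "psd_proj A = (THE B. B \<in> psd_cone \<and> (\<forall>C\<in>psd_cone. dist A B \<le> dist A C))"

definition real_eigs :: "real^'n^'n \<Rightarrow> real set" where
  "real_eigs A = {l. \<exists>v. v \<noteq> 0 \<and> A *v v = l *\<^sub>R v}"

definition lam_max :: "real^'n^'n \<Rightarrow> real" where
  "lam_max A = Max (real_eigs A)"

definition lam_min :: "real^'n^'n \<Rightarrow> real" where
  "lam_min A = Min (real_eigs A)"

definition hurwitz :: "real^'n^'n \<Rightarrow> bool" where
  "hurwitz A \<longleftrightarrow> (\<forall>(l::complex) (v::complex^'n). v \<noteq> 0 \<and>
      (\<forall>i. (\<Sum>j\<in>UNIV. complex_of_real (A$i$j) * v$j) = l * v$i) \<longrightarrow> Re l < 0)"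

definition A0 :: "real^('n::{finite,linorder})^('n::{finite,linorder})" where
  "A0 = (\<chi> i j. if cpos j = cpos i + 1 then 1 else 0)"

definition e_last :: "real^'n::{finite,linorder}" where
  "e_last = (\<chi> i. if cpos i = CARD('n) - 1 then 1 else 0)"

definition Fmat :: "real^('n::{finite,linorder}) \<Rightarrow> real^('n::{finite,linorder})^('n::{finite,linorder})" where
  "Fmat K = A0 - (\<chi> i j. e_last$i * K$j)"

definition C1 :: "(real^'n \<Rightarrow> real) \<Rightarrow> bool" where
  "C1 f \<longleftrightarrow> (\<exists>G. (\<forall>x. (f has_derivative (\<lambda>h. G x \<bullet> h)) (at x)) \<and> continuous_on UNIV G)"

definition gam :: "real^'n^'n \<Rightarrow> real^'n^'n \<Rightarrow> real" where
  "gam P Q = 4 * lam_max P ^ 3 / lam_min Q ^ 2"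

definition ebar :: "real^'n^'n \<Rightarrow> real^'n^'n \<Rightarrow> real \<Rightarrow> real" where
  "ebar P Q wb = sqrt (gam P Q * wb^2 / lam_min P)"

definition Mab :: "real \<Rightarrow> real \<Rightarrow> real^2^2" where
  "Mab a b = psd_proj (vector [vector [2*a*b, b], vector [b, 0]])"

definition Nab :: "real \<Rightarrow> real \<Rightarrow> real \<Rightarrow> real \<Rightarrow> real \<Rightarrow> real^2" where
  \<comment> \<open>arguments: alpha beta e-bar norm(K) g(xbar)\<close>
  "Nab a b e nK gx = vector [2*a*b*e + a * \<bar>inverse gx\<bar> + b * nK * e, \<bar>inverse gx\<bar> + b*e]"

definition Gab :: "real \<Rightarrow> real \<Rightarrow> real \<Rightarrow> real \<Rightarrow> real \<Rightarrow> real" where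
  "Gab a b e nK gx = e * (b*e + \<bar>inverse gx\<bar>) * (a + nK)"

definition quadf :: "real^2^2 \<Rightarrow> real^2 \<Rightarrow> real \<Rightarrow> real^2 \<Rightarrow> real" where
  "quadf M Nv G s = (1/2) * (s \<bullet> (M *v s)) + Nv \<bullet> s + G"

definition bern :: "nat \<Rightarrow> real \<Rightarrow> nat \<Rightarrow> real \<Rightarrow> real" where
  "bern p T i \<tau> = real (p choose i) * (\<tau>/T)^i * (1 - \<tau>/T)^(p-i)"

definition bez :: "nat \<Rightarrow> real \<Rightarrow> (nat \<Rightarrow> real) \<Rightarrow> real \<Rightarrow> real" where
  "bez p T c \<tau> = (\<Sum>i\<le>p. c i * bern p T i \<tau>)"

text \<open>S (p x (p+1)) and R ((p+1) x p), 0-based indices.\<close>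
definition Sm :: "nat \<Rightarrow> nat \<Rightarrow> nat \<Rightarrow> real" where
  "Sm p a b = (if b = a then - real p else if b = a + 1 then real p else 0)"

definition Rm :: "nat \<Rightarrow> nat \<Rightarrow> nat \<Rightarrow> real" where
  "Rm p a b = (if a = b then real (p - a) / real p else if a = b + 1 then real a / real p else 0)"

text \<open>bez_ctrl p T c j = xi_j = T^-j (H^T)^j c, with H^T = R S.\<close>
fun bez_ctrl :: "nat \<Rightarrow> real \<Rightarrow> (nat \<Rightarrow> real) \<Rightarrow> nat \<Rightarrow> nat \<Rightarrow> real" where
  "bez_ctrl p T c 0 = c"
| "bez_ctrl p T c (Suc j) =
     (\<lambda>a. (\<Sum>m<p. Rm p a m * (\<Sum>l\<le>p. Sm p m l * bez_ctrl p T c j l)) / T)"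

definition rvec :: "nat \<Rightarrow> real \<Rightarrow> (nat \<Rightarrow> real) \<Rightarrow> real \<Rightarrow> real^'n::{finite,linorder}" where
  "rvec p T c \<tau> = (\<chi> i. (deriv ^^ cpos i) (bez p T c) \<tau>)"

definition zeta :: "nat \<Rightarrow> real \<Rightarrow> (nat \<Rightarrow> real) \<Rightarrow> nat \<Rightarrow> real^'n::{finite,linorder}" where
  "zeta p T c i = (\<chi> j. bez_ctrl p T c (cpos j) i)"

text \<open>Desired trajectory x_d on [t_lo, t_lo + N T]; xi k is the control vector xi_{k,0} of r_k.\<close>
definition xd :: "nat \<Rightarrow> real \<Rightarrow> real \<Rightarrow> (nat \<Rightarrow> real^'n::{finite,linorder}) \<Rightarrow> (nat \<Rightarrow> nat \<Rightarrow> real)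
    \<Rightarrow> real \<Rightarrow> real^('n::{finite,linorder})" where
  "xd N T tlo xs xi t =
     (if t \<ge> tlo + real N * T then xs N
      else (let k = nat \<lfloor>(t - tlo) / T\<rfloor> in
            rvec (2 * CARD('n) - 1) T (xi k) (t - (tlo + real k * T))))"

end

theory Submission
  imports Defs
begin

text \<open>On [0, T] the Bernstein basis polynomials are nonnegative and sum to one, and the
  control points of the j-th derivative of a Bezier curve are given by the recursion
  xi_(j+1) = T^-1 H^T xi_j. Hence x_d(t) is a convex combination of the points zeta_(k,i), and
  r_k^(n)(t - t_k) one of the numbers xi_(k,n,i), so sigma(t) \<le> s_k componentwise. The PSD
  projection of [[2 alpha beta, beta], [beta, 0]] is u u^T for a vector u \<ge> 0 spanning its
  positive eigenspace, and N has nonnegative entries, so the quadratic bound is monotone on the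
  nonnegative quadrant and passes from s_k to sigma(t).\<close>

section \<open>Bernstein polynomials\<close>

lemma bern_nonneg: "0 \<le> \<tau> \<Longrightarrow> \<tau> \<le> T \<Longrightarrow> 0 \<le> bern p T i \<tau>"
  unfolding bern_def by (cases "T = 0") simp_all

lemma sum_bern: "(\<Sum>i\<le>p. bern p T i \<tau>) = 1"
proof -
  have "(\<Sum>i\<le>p. bern p T i \<tau>) = (\<tau>/T + (1 - \<tau>/T)) ^ p"
    unfolding binomial_ring bern_def by simp
  then show ?thesis by simp
qed

lemma bern_eq_0: "p < i \<Longrightarrow> bern p T i \<tau> = 0"
  by (simp add: bern_def)

lemma bern_sum_in_convex:
  fixes v :: "nat \<Rightarrow> 'a::real_vector"
  assumes "convex C" "0 \<le> \<tau>" "\<tau> \<le> T" "\<And>i. i \<le> p \<Longrightarrow> v i \<in> C"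
  shows "(\<Sum>i\<le>p. bern p T i \<tau> *\<^sub>R v i) \<in> C"
  using assms by (intro convex_sum) (auto simp: sum_bern bern_nonneg)

lemma real_Suc_times_binomial:
  "real (Suc k) * real (Suc q choose Suc k) = real (Suc q) * real (q choose k)"
  using Suc_times_binomial_eq[of q k] by (metis mult.commute of_nat_mult)

lemma real_binomial_absorb_comp:
  "real (Suc q - k) * real (Suc q choose k) = real (Suc q) * real (q choose k)"
  using binomial_absorb_comp[of "Suc q" k] by (metis diff_Suc_1 of_nat_mult)

lemma bern_degree_elevation:
  "bern q T m \<tau> = real (Suc q - m) / real (Suc q) * bern (Suc q) T m \<tau>
                 + real (Suc m) / real (Suc q) * bern (Suc q) T (Suc m) \<tau>"
proof (cases "m \<le> q")
  case True
  define x y where "x = \<tau>/T" and "y = 1 - \<tau>/T"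
  have bern_xy: "bern p T i \<tau> = real (p choose i) * x ^ i * y ^ (p - i)" for p i
    by (simp add: bern_def x_def y_def)
  have lower: "real (Suc q - m) / real (Suc q) * real (Suc q choose m) = real (q choose m)"
    using real_binomial_absorb_comp[of q m] by (simp add: field_simps del: binomial_Suc_Suc)
  have upper: "real (Suc m) / real (Suc q) * real (Suc q choose Suc m) = real (q choose m)"
    using real_Suc_times_binomial[of m q] by (simp add: field_simps del: binomial_Suc_Suc)
  have "real (Suc q - m) / real (Suc q) * bern (Suc q) T m \<tau>
          + real (Suc m) / real (Suc q) * bern (Suc q) T (Suc m) \<tau>
      = (real (Suc q - m) / real (Suc q) * real (Suc q choose m)) * x ^ m * y ^ (q - m) * y
        + (real (Suc m) / real (Suc q) * real (Suc q choose Suc m)) * x ^ m * y ^ (q - m) * x"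
    unfolding bern_xy using True by (simp add: Suc_diff_le mult_ac del: binomial_Suc_Suc)
  also have "\<dots> = real (q choose m) * x ^ m * y ^ (q - m) * (y + x)"
    unfolding lower upper by (simp add: algebra_simps)
  also have "\<dots> = bern q T m \<tau>"
    by (simp add: bern_xy x_def y_def)
  finally show ?thesis ..
qed (simp add: bern_def binomial_eq_0 del: binomial_Suc_Suc)

lemma has_real_derivative_bern:
  assumes "T \<noteq> 0"
  shows "(bern (Suc q) T i has_real_derivative
           real (Suc q) / T * ((if i = 0 then 0 else bern q T (i - 1) \<tau>) - bern q T i \<tau>)) (at \<tau>)"
proof -
  define x y where "x = \<tau>/T" and "y = 1 - \<tau>/T"
  have bern_xy: "bern p T k \<tau> = real (p choose k) * x ^ k * y ^ (p - k)" for p k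
    by (simp add: bern_def x_def y_def)
  have monomial: "((\<lambda>t. (t/T) ^ a * (1 - t/T) ^ b) has_real_derivative
      (real a * x ^ (a - 1) * y ^ b - real b * x ^ a * y ^ (b - 1)) / T) (at \<tau>)" for a b
    unfolding x_def y_def using assms
    by (auto intro!: derivative_eq_intros simp: diff_divide_distrib)
  have "bern (Suc q) T i = (\<lambda>t. real (Suc q choose i) * ((t/T) ^ i * (1 - t/T) ^ (Suc q - i)))"
    by (simp add: fun_eq_iff bern_def mult.assoc)
  then have "(bern (Suc q) T i has_real_derivative real (Suc q choose i) *
      ((real i * x ^ (i - 1) * y ^ (Suc q - i) - real (Suc q - i) * x ^ i * y ^ (Suc q - i - 1)) / T))
      (at \<tau>)"
    by (simp only:) (rule DERIV_cmult[OF monomial])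
  moreover have "real (Suc q choose i) * ((real i * x ^ (i - 1) * y ^ (Suc q - i)
        - real (Suc q - i) * x ^ i * y ^ (Suc q - i - 1)) / T)
      = real (Suc q) / T * ((if i = 0 then 0 else bern q T (i - 1) \<tau>) - bern q T i \<tau>)"
  proof (cases i)
    case 0
    then show ?thesis by (simp add: bern_xy)
  next
    case (Suc j)
    have upper: "real (Suc q choose Suc j) * real (Suc j) = real (Suc q) * real (q choose j)"
      using real_Suc_times_binomial[of j q] by (simp add: mult.commute del: binomial_Suc_Suc)
    have lower: "real (Suc q choose Suc j) * real (q - j) = real (Suc q) * real (q choose Suc j)"
      using real_binomial_absorb_comp[of q "Suc j"] by (simp add: mult.commute del: binomial_Suc_Suc)
    have "real (Suc q choose Suc j) * ((real (Suc j) * x ^ j * y ^ (q - j)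
          - real (q - j) * x ^ Suc j * y ^ (q - Suc j)) / T)
        = (real (Suc q choose Suc j) * real (Suc j)) * x ^ j * y ^ (q - j) / T
          - (real (Suc q choose Suc j) * real (q - j)) * x ^ Suc j * y ^ (q - Suc j) / T"
      by (simp add: algebra_simps diff_divide_distrib del: binomial_Suc_Suc)
    also have "\<dots> = real (Suc q) / T * (bern q T j \<tau> - bern q T (Suc j) \<tau>)"
      unfolding upper lower bern_xy by (simp add: algebra_simps diff_divide_distrib del: binomial_Suc_Suc)
    finally show ?thesis using Suc by (simp del: binomial_Suc_Suc)
  qed
  ultimately show ?thesis by (simp only:)
qed

section \<open>Derivatives of Bezier curves\<close>

lemma has_real_derivative_bez:
  assumes "T \<noteq> 0"
  shows "(bez (Suc q) T c has_real_derivative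
           (\<Sum>m\<le>q. real (Suc q) / T * (c (Suc m) - c m) * bern q T m \<tau>)) (at \<tau>)"
proof -
  let ?B = "\<lambda>i. bern q T i \<tau>"
  have "(bez (Suc q) T c has_real_derivative
      (\<Sum>i\<le>Suc q. c i * (real (Suc q) / T * ((if i = 0 then 0 else ?B (i - 1)) - ?B i)))) (at \<tau>)"
    unfolding bez_def[abs_def]
    by (intro DERIV_sum DERIV_cmult has_real_derivative_bern assms)
  also have "(\<Sum>i\<le>Suc q. c i * (real (Suc q) / T * ((if i = 0 then 0 else ?B (i - 1)) - ?B i)))
      = real (Suc q) / T * ((\<Sum>i\<le>Suc q. c i * (if i = 0 then 0 else ?B (i - 1)))
                            - (\<Sum>i\<le>Suc q. c i * ?B i))"
    by (simp add: sum_distrib_left sum_subtractf algebra_simps)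
  also have "(\<Sum>i\<le>Suc q. c i * (if i = 0 then 0 else ?B (i - 1))) = (\<Sum>m\<le>q. c (Suc m) * ?B m)"
    unfolding sum.atMost_Suc_shift by simp
  also have "(\<Sum>i\<le>Suc q. c i * ?B i) = (\<Sum>m\<le>q. c m * ?B m)"
    by (simp add: bern_eq_0)
  also have "real (Suc q) / T * ((\<Sum>m\<le>q. c (Suc m) * ?B m) - (\<Sum>m\<le>q. c m * ?B m))
      = (\<Sum>m\<le>q. real (Suc q) / T * (c (Suc m) - c m) * ?B m)"
    unfolding sum_subtractf[symmetric] sum_distrib_left by (rule sum.cong) (simp_all add: field_simps)
  finally show ?thesis .
qed

lemma sum_Sm: "m < p \<Longrightarrow> (\<Sum>l\<le>p. Sm p m l * d l) = real p * (d (Suc m) - d m)"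
proof -
  assume "m < p"
  then have "(\<Sum>l\<le>p. Sm p m l * d l) = (\<Sum>l\<in>{m, Suc m}. Sm p m l * d l)"
    by (intro sum.mono_neutral_right) (auto simp: Sm_def)
  then show ?thesis by (simp add: Sm_def algebra_simps)
qed

lemma sum_Rm:
  "m < p \<Longrightarrow> (\<Sum>a\<le>p. Rm p a m * w a) = real (p - m) / real p * w m + real (Suc m) / real p * w (Suc m)"
proof -
  assume "m < p"
  then have "(\<Sum>a\<le>p. Rm p a m * w a) = (\<Sum>a\<in>{m, Suc m}. Rm p a m * w a)"
    by (intro sum.mono_neutral_right) (auto simp: Rm_def)
  then show ?thesis by (simp add: Rm_def)
qed

text \<open>The derivative comes out in the Bernstein basis of degree p - 1 with coefficients given
  by the differences S c; degree elevation back to degree p is the matrix R.\<close>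
lemma deriv_bez:
  assumes "T \<noteq> 0" "0 < p"
  shows "deriv (bez p T c) = bez p T (bez_ctrl p T c 1)"
proof
  fix \<tau>
  obtain q where p: "p = Suc q" using \<open>0 < p\<close> gr0_implies_Suc by blast
  let ?B = "\<lambda>a. bern p T a \<tau>" and ?D = "\<lambda>m. (\<Sum>l\<le>p. Sm p m l * c l) / T"
  have elevation: "bern q T m \<tau> = real (p - m) / real p * ?B m + real (Suc m) / real p * ?B (Suc m)" for m
    unfolding p by (rule bern_degree_elevation)
  have "deriv (bez p T c) \<tau> = (\<Sum>m<p. real p / T * (c (Suc m) - c m) * bern q T m \<tau>)"
    unfolding p lessThan_Suc_atMost using assms(1) by (rule DERIV_imp_deriv[OF has_real_derivative_bez])
  also have "\<dots> = (\<Sum>m<p. ?D m * (\<Sum>a\<le>p. Rm p a m * ?B a))"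
    unfolding elevation using assms(1) by (intro sum.cong refl) (simp add: sum_Sm sum_Rm)
  also have "\<dots> = (\<Sum>a\<le>p. (\<Sum>m<p. Rm p a m * ?D m) * ?B a)"
    by (simp add: sum_distrib_left sum_distrib_right sum.swap[of _ "{..<p}"] mult_ac)
  also have "\<dots> = bez p T (bez_ctrl p T c 1) \<tau>"
    by (simp add: bez_def sum_divide_distrib[symmetric])
  finally show "deriv (bez p T c) \<tau> = bez p T (bez_ctrl p T c 1) \<tau>" .
qed

lemma higher_deriv_bez:
  assumes "T \<noteq> 0" "0 < p"
  shows "(deriv ^^ j) (bez p T c) = bez p T (bez_ctrl p T c j)"
  by (induction j) (simp_all add: deriv_bez[OF assms])

lemma higher_deriv_bez_in_convex:
  assumes "convex C" "0 \<le> \<tau>" "\<tau> \<le> T" "T \<noteq> 0" "0 < p" "\<And>i. i \<le> p \<Longrightarrow> bez_ctrl p T c j i \<in> C"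
  shows "(deriv ^^ j) (bez p T c) \<tau> \<in> C"
proof -
  have "(deriv ^^ j) (bez p T c) \<tau> = (\<Sum>i\<le>p. bern p T i \<tau> *\<^sub>R bez_ctrl p T c j i)"
    using assms(4,5) by (simp add: higher_deriv_bez bez_def mult.commute)
  then show ?thesis
    using bern_sum_in_convex[OF assms(1-3), of p "bez_ctrl p T c j"] assms(6) by simp
qed

lemma rvec_in_convex:
  fixes C :: "(real^'n::{finite,linorder}) set"
  assumes "convex C" "0 \<le> \<tau>" "\<tau> \<le> T" "T \<noteq> 0" "0 < p" "\<And>i. i \<le> p \<Longrightarrow> zeta p T c i \<in> C"
  shows "rvec p T c \<tau> \<in> C"
proof -
  have "(rvec p T c \<tau> :: real^'n::{finite,linorder}) = (\<Sum>i\<le>p. bern p T i \<tau> *\<^sub>R zeta p T c i)"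
    using assms(4,5)
    by (simp add: vec_eq_iff rvec_def zeta_def higher_deriv_bez bez_def sum_component mult.commute)
  then show ?thesis using assms(1-3,6) by (simp add: bern_sum_in_convex)
qed

lemma xd_on_segment:
  assumes "0 < T" "k < N" "tlo + real k * T \<le> t" "t < tlo + real (Suc k) * T"
  shows "(xd N T tlo xs xi t :: real^'n::{finite,linorder})
           = rvec (2 * CARD('n) - 1) T (xi k) (t - (tlo + real k * T))"
proof -
  have "real (Suc k) * T \<le> real N * T"
    using assms(1,2) by (intro mult_right_mono) simp_all
  then have "\<not> tlo + real N * T \<le> t" using assms(4) by linarith
  moreover have "\<lfloor>(t - tlo) / T\<rfloor> = int k"
    using assms(1,3,4) by (intro floor_unique) (simp_all add: field_simps)
  ultimately show ?thesis by (simp add: xd_def)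
qed

section \<open>Projection onto the PSD cone\<close>

definition outer :: "real^'n \<Rightarrow> real^'n^'n" where
  "outer u = (\<chi> i j. u$i * u$j)"

lemma outer_quadratic_form: "x \<bullet> (outer u *v x) = (u \<bullet> x)\<^sup>2"
  by (simp add: outer_def inner_vec_def matrix_vector_mult_def power2_eq_square
      sum_distrib_left sum_distrib_right mult_ac)

lemma inner_outer: "A \<bullet> outer x = x \<bullet> (A *v x)"
  by (simp add: outer_def inner_vec_def matrix_vector_mult_def sum_distrib_left mult_ac)

lemma outer_in_psd_cone: "outer u \<in> psd_cone"
  unfolding psd_cone_def sym_mat_def
  by (simp add: outer_quadratic_form) (simp add: transpose_def outer_def vec_eq_iff mult.commute)

text \<open>For PSD D, the squared distance from outer u - outer x to D splits as
  |outer x|^2 + |outer u - D|^2 + 2 x^T D x, because outer u and outer x are orthogonal.\<close>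
lemma psd_proj_outer_diff:
  assumes "u \<bullet> x = 0"
  shows "psd_proj (outer u - outer x) = outer u"
proof -
  let ?A = "outer u - outer x"
  have pythagoras: "(dist ?A (outer u))\<^sup>2 + (dist (outer u) D)\<^sup>2 \<le> (dist ?A D)\<^sup>2"
    if "D \<in> psd_cone" for D
  proof -
    have "outer u \<bullet> outer x = 0"
      using assms by (simp add: inner_outer outer_quadratic_form inner_commute)
    then have "(outer u - D) \<bullet> outer x = - (D \<bullet> outer x)"
      by (simp add: inner_diff_left)
    moreover have "0 \<le> D \<bullet> outer x"
      using that by (simp add: inner_outer psd_cone_def)
    moreover have "(dist ?A D)\<^sup>2 = (norm (outer u - D))\<^sup>2 + (norm (outer x))\<^sup>2 - 2 * ((outer u - D) \<bullet> outer x)"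
      using dot_norm_neg[of "outer u - D" "outer x"] by (simp add: dist_norm algebra_simps)
    moreover have "dist ?A (outer u) = norm (outer x)" "dist (outer u) D = norm (outer u - D)"
      by (simp_all add: dist_norm)
    ultimately show ?thesis by simp
  qed
  have minimal: "dist ?A (outer u) \<le> dist ?A D" if "D \<in> psd_cone" for D
  proof -
    have "(dist ?A (outer u))\<^sup>2 \<le> (dist ?A D)\<^sup>2"
      using pythagoras[OF that] zero_le_power2[of "dist (outer u) D"] by linarith
    then show ?thesis by (rule power2_le_imp_le) simp
  qed
  show ?thesis
    unfolding psd_proj_def
  proof (rule the_equality)
    show "outer u \<in> psd_cone \<and> (\<forall>D\<in>psd_cone. dist ?A (outer u) \<le> dist ?A D)"
      using outer_in_psd_cone minimal by blast
  next
    fix B assume B: "B \<in> psd_cone \<and> (\<forall>D\<in>psd_cone. dist ?A B \<le> dist ?A D)"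
    then have "dist ?A B \<le> dist ?A (outer u)"
      using outer_in_psd_cone by blast
    then have "(dist ?A B)\<^sup>2 \<le> (dist ?A (outer u))\<^sup>2"
      by (simp add: power_mono)
    with pythagoras[of B] B have "(dist (outer u) B)\<^sup>2 \<le> 0"
      by linarith
    then show "B = outer u" by simp
  qed
qed

lemma Mab_eq_outer:
  assumes "0 \<le> b"
  obtains u where "0 \<le> u$1" "0 \<le> u$2" "Mab a b = outer u"
proof (cases "b = 0")
  case True
  have "vector [vector [2*a*b, b], vector [b, 0]] = outer 0 - (outer 0 :: real^2^2)"
    using True by (simp add: outer_def vec_eq_iff forall_2)
  then have "Mab a b = outer 0"
    unfolding Mab_def by (simp only: psd_proj_outer_diff inner_zero_left)
  then show ?thesis by (intro that[of 0]) simp_all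
next
  case False
  \<comment> \<open>l1 \<ge> 0 \<ge> l2 are the eigenvalues, with orthogonal eigenvectors (l1, b) and (l2, b)
    whose squared lengths are d times the moduli of the eigenvalues.\<close>
  define d where "d = sqrt ((2*a*b)\<^sup>2 + 4*b\<^sup>2)"
  define l1 l2 where "l1 = (2*a*b + d) / 2" and "l2 = (2*a*b - d) / 2"
  define u x :: "real^2" where "u = (1 / sqrt d) *\<^sub>R vector [l1, b]" and "x = (1 / sqrt d) *\<^sub>R vector [l2, b]"
  have "0 < d" using False by (simp add: d_def add_nonneg_pos)
  have "d\<^sup>2 = (2*a*b)\<^sup>2 + 4*b\<^sup>2" by (simp add: d_def)
  have "\<bar>2*a*b\<bar> \<le> d" unfolding d_def by (rule real_le_rsqrt) simp
  then have "0 \<le> l1" by (simp add: l1_def)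
  have "l1 * l2 = - b\<^sup>2"
    using \<open>d\<^sup>2 = _\<close> by (simp add: l1_def l2_def field_simps power2_eq_square)
  then have "u \<bullet> x = 0"
    by (simp add: u_def x_def inner_vec_def sum_2 power2_eq_square)
  moreover have "vector [vector [2*a*b, b], vector [b, 0]] = outer u - outer x"
    using \<open>0 < d\<close> \<open>l1 * l2 = - b\<^sup>2\<close>
    by (simp add: vec_eq_iff forall_2 outer_def u_def x_def l1_def l2_def field_simps power2_eq_square)
  ultimately have "Mab a b = outer u"
    by (simp add: Mab_def psd_proj_outer_diff)
  moreover have "0 \<le> u$1" "0 \<le> u$2"
    using \<open>0 \<le> l1\<close> \<open>0 \<le> b\<close> \<open>0 < d\<close> by (simp_all add: u_def)
  ultimately show ?thesis using that by blast
qed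

section \<open>The quadratic bound\<close>

lemma inner_nonneg_mono:
  fixes u x y :: "real^'n"
  assumes "\<And>i. 0 \<le> u$i" "\<And>i. x$i \<le> y$i"
  shows "u \<bullet> x \<le> u \<bullet> y"
  unfolding inner_vec_def using assms by (intro sum_mono) (simp add: mult_left_mono)

lemma quadf_outer_mono:
  assumes "\<And>i. 0 \<le> u$i" "\<And>i. 0 \<le> Nv$i" "\<And>i. 0 \<le> s$i" "\<And>i. s$i \<le> s'$i"
  shows "quadf (outer u) Nv G s \<le> quadf (outer u) Nv G s'"
proof -
  have "0 \<le> u \<bullet> s" using inner_nonneg_mono[of u 0 s] assms(1,3) by simp
  moreover have "u \<bullet> s \<le> u \<bullet> s'" "Nv \<bullet> s \<le> Nv \<bullet> s'"
    using assms by (simp_all add: inner_nonneg_mono)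
  ultimately have "(u \<bullet> s)\<^sup>2 \<le> (u \<bullet> s')\<^sup>2" "Nv \<bullet> s \<le> Nv \<bullet> s'"
    by (simp_all add: power_mono)
  then show ?thesis by (simp add: quadf_def outer_quadratic_form)
qed

lemma Nab_nonneg:
  "0 \<le> a \<Longrightarrow> 0 \<le> b \<Longrightarrow> 0 \<le> e \<Longrightarrow> 0 \<le> nK \<Longrightarrow> 0 \<le> Nab a b e nK gx $ i"
  using exhaust_2[of i] by (auto simp: Nab_def)

lemma quadf_Mab_Nab_mono:
  assumes "0 \<le> a" "0 \<le> b" "0 \<le> e" "0 \<le> nK"
    and "0 \<le> y1" "y1 \<le> s$1" "0 \<le> y2" "y2 \<le> s$2"
  shows "quadf (Mab a b) (Nab a b e nK gx) G (vector [y1, y2]) \<le> quadf (Mab a b) (Nab a b e nK gx) G s"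
proof -
  obtain u where "0 \<le> u$1" "0 \<le> u$2" "Mab a b = outer u"
    using Mab_eq_outer assms(2) by blast
  moreover have "quadf (outer u) (Nab a b e nK gx) G (vector [y1, y2]) \<le> quadf (outer u) (Nab a b e nK gx) G s"
  proof (rule quadf_outer_mono)
    fix i :: 2
    show "0 \<le> u$i" "0 \<le> vector [y1, y2] $ i" "vector [y1, y2] $ i \<le> s$i"
      using exhaust_2[of i] \<open>0 \<le> u$1\<close> \<open>0 \<le> u$2\<close> assms(5-8) by auto
    show "0 \<le> Nab a b e nK gx $ i"
      using assms(1-4) by (rule Nab_nonneg)
  qed
  ultimately show ?thesis by simp
qed

lemma pos_def_real_eigs_pos: "pos_def P \<Longrightarrow> l \<in> real_eigs P \<Longrightarrow> 0 < l"
proof -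
  assume "pos_def P" "l \<in> real_eigs P"
  then obtain v where "v \<noteq> 0" "P *v v = l *\<^sub>R v" "0 < v \<bullet> (P *v v)"
    by (auto simp: real_eigs_def pos_def_def)
  then show "0 < l" using inner_ge_zero[of v] by (auto simp: zero_less_mult_iff)
qed

text \<open>If the eigenvalue set is infinite or empty, Max and Min of it are the same junk value,
  which suffices.\<close>
lemma ebar_nonneg:
  assumes "pos_def P"
  shows "0 \<le> ebar P Q wb"
proof -
  have "0 \<le> lam_max P ^ 3 / lam_min P"
  proof (cases "finite (real_eigs P) \<and> real_eigs P \<noteq> {}")
    case True
    then have "0 < lam_max P" "0 < lam_min P"
      unfolding lam_max_def lam_min_def by (blast intro: pos_def_real_eigs_pos[OF assms] Max_in Min_in)+
    then show ?thesis by simp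
  next
    case False
    then have "lam_max P = lam_min P"
      by (auto simp: lam_max_def lam_min_def Max.infinite Min.infinite Max.eq_fold' Min.eq_fold')
    then show ?thesis by (simp add: power3_eq_cube)
  qed
  then have "0 \<le> 4 * wb\<^sup>2 / (lam_min Q)\<^sup>2 * (lam_max P ^ 3 / lam_min P)"
    by (rule mult_nonneg_nonneg[rotated]) simp
  also have "\<dots> = gam P Q * wb\<^sup>2 / lam_min P"
    by (simp add: gam_def)
  finally show ?thesis
    by (simp add: ebar_def)
qed

theorem lemma6:
  fixes f g :: "real^('n::{finite,linorder}) \<Rightarrow> real"
    and X :: "(real^('n::{finite,linorder})) set"
    and K :: "real^('n::{finite,linorder})" and P Q :: "real^('n::{finite,linorder})^('n::{finite,linorder})" and wb :: real
    and N :: nat and T tlo :: real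
    and xs :: "nat \<Rightarrow> real^('n::{finite,linorder})" and xi :: "nat \<Rightarrow> nat \<Rightarrow> real"
    and \<alpha> \<beta> umax :: real and xb :: "nat \<Rightarrow> real^('n::{finite,linorder})"
  defines "n \<equiv> CARD('n)"
    and "p \<equiv> 2 * CARD('n) - 1"
    and "e \<equiv> ebar P Q wb"
  assumes f_C1: "C1 f" and g_C1: "C1 g" and f0: "f 0 = 0" and g_nz: "\<forall>x. g x \<noteq> 0"
    and X_poly: "polytope X" and X_0: "0 \<in> interior X"
    and K_hurwitz: "hurwitz (Fmat K)"
    and Q_pd: "pos_def Q" and P_pd: "pos_def P"
    and lyap: "transpose (Fmat K) ** P + P ** Fmat K = - Q"
    and wb_nn: "wb \<ge> 0"
    and T_pos: "T > 0" and tlo_nn: "tlo \<ge> 0"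
    and bez_start: "\<forall>k<N. \<forall>c. (deriv ^^ cpos c) (bez p T (xi k)) 0 = xs k $ c"
    and bez_end: "\<forall>k<N. \<forall>c. (deriv ^^ cpos c) (bez p T (xi k)) T = xs (Suc k) $ c"
    and ab: "\<alpha> \<ge> 0" "\<beta> \<ge> 0" and umax_pos: "umax > 0"
    and xb_X: "\<forall>k<N. xb k \<in> X"
    and hyp: "\<forall>k<N. \<exists>s::real^2. s$1 \<ge> 0 \<and> s$2 \<ge> 0 \<and>
       (\<forall>i\<le>p. norm (zeta p T (xi k) i - xb k) \<le> s$1 \<and>
                \<bar>bez_ctrl p T (xi k) n i - f (xb k)\<bar> \<le> s$2) \<and>
       quadf (Mab \<alpha> \<beta>) (Nab \<alpha> \<beta> e (norm K) (g (xb k))) (Gab \<alpha> \<beta> e (norm K) (g (xb k))) s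
         \<le> umax"
  shows "\<forall>k<N. \<forall>t. tlo + real k * T \<le> t \<and> t < tlo + real (Suc k) * T \<longrightarrow>
     quadf (Mab \<alpha> \<beta>) (Nab \<alpha> \<beta> e (norm K) (g (xb k))) (Gab \<alpha> \<beta> e (norm K) (g (xb k)))
       (vector [norm (xd N T tlo xs xi t - xb k),
                \<bar>(deriv ^^ n) (bez p T (xi k)) (t - (tlo + real k * T)) - f (xb k)\<bar>])
     \<le> umax"
proof (intro allI impI)
  fix k t
  assume "k < N" and t: "tlo + real k * T \<le> t \<and> t < tlo + real (Suc k) * T"
  let ?Q = "quadf (Mab \<alpha> \<beta>) (Nab \<alpha> \<beta> e (norm K) (g (xb k))) (Gab \<alpha> \<beta> e (norm K) (g (xb k)))"
  define \<tau> where "\<tau> = t - (tlo + real k * T)"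
  have "0 \<le> \<tau>" "\<tau> \<le> T" "T \<noteq> 0"
    using t T_pos by (simp_all add: \<tau>_def algebra_simps)
  have "0 < CARD('n)" by simp
  then have "0 < p" unfolding p_def by linarith
  obtain s :: "real^2"
    where zeta_ctrl: "\<And>i. i \<le> p \<Longrightarrow> zeta p T (xi k) i \<in> cball (xb k) (s$1)"
    and deriv_ctrl: "\<And>i. i \<le> p \<Longrightarrow> bez_ctrl p T (xi k) n i \<in> cball (f (xb k)) (s$2)"
    and s_bound: "?Q s \<le> umax"
    using hyp \<open>k < N\<close> by (simp add: dist_norm norm_minus_commute abs_minus_commute) blast
  have "xd N T tlo xs xi t = rvec p T (xi k) \<tau>"
    unfolding p_def \<tau>_def using T_pos \<open>k < N\<close> t by (intro xd_on_segment) auto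
  moreover have "rvec p T (xi k) \<tau> \<in> cball (xb k) (s$1)"
    by (rule rvec_in_convex[OF convex_cball \<open>0 \<le> \<tau>\<close> \<open>\<tau> \<le> T\<close> \<open>T \<noteq> 0\<close> \<open>0 < p\<close> zeta_ctrl])
  ultimately have state_bound: "norm (xd N T tlo xs xi t - xb k) \<le> s$1"
    by (simp add: dist_norm norm_minus_commute)
  have "(deriv ^^ n) (bez p T (xi k)) \<tau> \<in> cball (f (xb k)) (s$2)"
    by (rule higher_deriv_bez_in_convex[OF convex_cball \<open>0 \<le> \<tau>\<close> \<open>\<tau> \<le> T\<close> \<open>T \<noteq> 0\<close> \<open>0 < p\<close> deriv_ctrl])
  then have input_bound: "\<bar>(deriv ^^ n) (bez p T (xi k)) \<tau> - f (xb k)\<bar> \<le> s$2"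
    by (simp add: dist_real_def abs_minus_commute)
  have "0 \<le> e"
    unfolding e_def using P_pd by (rule ebar_nonneg)
  with ab state_bound input_bound
  have "?Q (vector [norm (xd N T tlo xs xi t - xb k), \<bar>(deriv ^^ n) (bez p T (xi k)) \<tau> - f (xb k)\<bar>]) \<le> ?Q s"
    by (intro quadf_Mab_Nab_mono) simp_all
  with s_bound show "?Q (vector [norm (xd N T tlo xs xi t - xb k),
      \<bar>(deriv ^^ n) (bez p T (xi k)) (t - (tlo + real k * T)) - f (xb k)\<bar>]) \<le> umax"
    unfolding \<tau>_def by linarith
qed

end
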